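(* For every $y_0\in Y$, $$\limsup_{T\to\infty}\Gamma_T(y_0)\subset W_2(y_0)\qquad\text{and}\qquad \limsup_{\alpha\uparrow 1}\Theta_\alpha(y_0)\subset W_2(y_0).$$ In particular, $W_2(y_0)$ is nonempty.
   Context: Let $Y\subset\mathbb{R}^m$ be a nonempty compact set and $U_0$ a compact metric space. Let $U(\cdot):Y\rightsquigarrow U_0$ be an upper semicontinuous compact-valued set-valued map, and let $f:\mathbb{R}^m\times U_0\to\mathbb{R}^m$ be continuous. For $y\in Y$ put $A(y):=\{u\in U(y): f(y,u)\in Y\}$ and let $G:=\{(y,u): y\in Y,\ u\in A(y)\}$, which is a compact subset of $Y\times U_0$. Standing assumption: $A(y)\neq\emptyset$ for every $y\in Y$. For $y_0\in Y$, an admissible process on $\{0,\dots,T-1\}$ (respectively on $\{0,1,2,\dots\}$) is a pair of sequences $(y(t),u(t))$ with $y(0)=y_0$, $u(t)\in A(y(t))$ and $y(t+1)=f(y(t),u(t))$ for all $t$ in that range. The corresponding controls form the set $\mathcal U_T(y_0)$ (respectively $\mathcal U(y_0)$). Occupational measures: - For an admissible process on $\{0,\dots,T-1\}$, the occupational measure is the Borel probability measure on $G$ given by $\gamma(Q)=\frac1T\sum_{t=0}^{T-1}1_Q(y(t),u(t))$. - For an admissible process on $\{0,1,\dots\}$ and $\alpha\in(0,1)$, the discounted occupational measure is $\gamma^\alpha(Q)=(1-\alpha)\sum_{t=0}^\infty\alpha^t 1_Q(y(t),u(t))$. - $\Gamma_T(y_0)$ is the set of occupational measures generated by controls in $\mathcal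 U_T(y_0)$. - $\Theta_\alpha(y_0)$ is the set of discounted occupational measures generated by controls in $\mathcal U(y_0)$. Measure spaces and the set $W$: - $\mathcal P(G)$ is the set of Borel probability measures on $G$, equipped with the weak$^*$ topology (convergence of integrals of all continuous functions on $G$). - $\mathcal M_+(G)$ is the set of finite nonnegative Borel measures on $G$. - $W:=\{\gamma\in\mathcal P(G): \int_G(\varphi(f(y,u))-\varphi(y))\,\gamma(dy,du)=0\ \text{for all }\varphi\in C(Y)\}$. - $W_2(y_0)$ is the set of $\gamma\in W$ for which there exists a sequence $\xi_i\in\mathcal M_+(G)$, $i=1,2,\dots$, such that for all $\varphi\in C(Y)$: $$\int_G(\varphi(y)-\varphi(y_0))\,\gamma(dy,du)=\lim_{i\to\infty}\int_G(\varphi(f(y,u))-\varphi(y))\,\xi_i(dy,du).$$ Upper limits: - $\limsup_{T\to\infty}\Gamma_T(y_0)$ is the set of $\gamma\in\mathcal P(G)$ for which there exist integers $T_i\to\infty$ and $\gamma_i\in\Gamma_{T_i}(y_0)$ with $\gamma_i\to\gamma$ weakly$^*$. - $\limsup_{\alpha\uparrow1}\Theta_\alpha(y_0)$ is defined analogously with $\alpha_i\uparrow1$ and $\gamma_i\in\Theta_{\alpha_i}(y_0)$. *)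

theory Defs
  imports "HOL-Probability.Probability"
begin

definition usc_on :: "'a::metric_space set \<Rightarrow> ('a \<Rightarrow> 'b::topological_space set) \<Rightarrow> bool" where
  "usc_on Y U \<longleftrightarrow> (\<forall>y\<in>Y. \<forall>V. open V \<and> U y \<subseteq> V \<longrightarrow>
      (\<exists>e>0. \<forall>y'\<in>Y. dist y' y < e \<longrightarrow> U y' \<subseteq> V))"

definition Aset :: "'a set \<Rightarrow> ('a \<Rightarrow> 'b set) \<Rightarrow> ('a \<Rightarrow> 'b \<Rightarrow> 'a) \<Rightarrow> 'a \<Rightarrow> 'b set" where
  "Aset Y U f y = {u \<in> U y. f y u \<in> Y}"

definition Gset :: "'a set \<Rightarrow> ('a \<Rightarrow> 'b set) \<Rightarrow> ('a \<Rightarrow> 'b \<Rightarrow> 'a) \<Rightarrow> ('a \<times> 'b) set" where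
  "Gset Y U f = {(y, u). y \<in> Y \<and> u \<in> Aset Y U f y}"

definition prob_on :: "('c::topological_space) set \<Rightarrow> 'c measure set" where
  "prob_on G = {M. sets M = sets (restrict_space borel G) \<and> prob_space M}"

definition fin_on :: "('c::topological_space) set \<Rightarrow> 'c measure set" where
  "fin_on G = {M. sets M = sets (restrict_space borel G) \<and> finite_measure M}"

definition weak_conv :: "('c::topological_space) set \<Rightarrow> (nat \<Rightarrow> 'c measure) \<Rightarrow> 'c measure \<Rightarrow> bool" where
  "weak_conv G gs g \<longleftrightarrow> (\<forall>\<phi>::'c \<Rightarrow> real. continuous_on G \<phi> \<longrightarrow>
      (\<lambda>i. integral\<^sup>L (gs i) \<phi>) \<longlonglongrightarrow> integral\<^sup>L g \<phi>)"

definition admissible_fin where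
  "admissible_fin Y U f T y0 (y :: nat \<Rightarrow> 'a) (u :: nat \<Rightarrow> 'b) \<longleftrightarrow> y 0 = y0 \<and>
     (\<forall>t<T. y t \<in> Y \<and> u t \<in> Aset Y U f (y t) \<and> y (Suc t) = f (y t) (u t))"

definition admissible_inf where
  "admissible_inf Y U f y0 (y :: nat \<Rightarrow> 'a) (u :: nat \<Rightarrow> 'b) \<longleftrightarrow> y 0 = y0 \<and>
     (\<forall>t. y t \<in> Y \<and> u t \<in> Aset Y U f (y t) \<and> y (Suc t) = f (y t) (u t))"

definition Gamma :: "'a::topological_space set \<Rightarrow> ('a \<Rightarrow> 'b::topological_space set) \<Rightarrow> ('a \<Rightarrow> 'b \<Rightarrow> 'a)
    \<Rightarrow> nat \<Rightarrow> 'a \<Rightarrow> ('a \<times> 'b) measure set" where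
  "Gamma Y U f T y0 = {\<gamma> \<in> prob_on (Gset Y U f). \<exists>y u. admissible_fin Y U f T y0 y u \<and>
     (\<forall>Q \<in> sets \<gamma>. emeasure \<gamma> Q = ennreal ((\<Sum>t<T. indicator Q (y t, u t)) / real T))}"

definition Theta :: "'a::topological_space set \<Rightarrow> ('a \<Rightarrow> 'b::topological_space set) \<Rightarrow> ('a \<Rightarrow> 'b \<Rightarrow> 'a)
    \<Rightarrow> real \<Rightarrow> 'a \<Rightarrow> ('a \<times> 'b) measure set" where
  "Theta Y U f \<alpha> y0 = {\<gamma> \<in> prob_on (Gset Y U f). \<exists>y u. admissible_inf Y U f y0 y u \<and>
     (\<forall>Q \<in> sets \<gamma>. emeasure \<gamma> Q = ennreal ((1 - \<alpha>) * (\<Sum>t. \<alpha> ^ t * indicator Q (y t, u t))))}"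

definition Wset :: "'a::topological_space set \<Rightarrow> ('a \<Rightarrow> 'b::topological_space set) \<Rightarrow> ('a \<Rightarrow> 'b \<Rightarrow> 'a)
    \<Rightarrow> ('a \<times> 'b) measure set" where
  "Wset Y U f = {\<gamma> \<in> prob_on (Gset Y U f). \<forall>\<phi>::'a \<Rightarrow> real. continuous_on Y \<phi> \<longrightarrow>
      integral\<^sup>L \<gamma> (\<lambda>(y, u). \<phi> (f y u) - \<phi> y) = 0}"

definition W2set :: "'a::topological_space set \<Rightarrow> ('a \<Rightarrow> 'b::topological_space set) \<Rightarrow> ('a \<Rightarrow> 'b \<Rightarrow> 'a)
    \<Rightarrow> 'a \<Rightarrow> ('a \<times> 'b) measure set" where
  "W2set Y U f y0 = {\<gamma> \<in> Wset Y U f. \<exists>\<xi> :: nat \<Rightarrow> ('a \<times> 'b) measure.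
      (\<forall>i. \<xi> i \<in> fin_on (Gset Y U f)) \<and>
      (\<forall>\<phi>::'a \<Rightarrow> real. continuous_on Y \<phi> \<longrightarrow>
         (\<lambda>i. integral\<^sup>L (\<xi> i) (\<lambda>(y, u). \<phi> (f y u) - \<phi> y))
           \<longlonglongrightarrow> integral\<^sup>L \<gamma> (\<lambda>(y, u). \<phi> y - \<phi> y0))}"

definition limsup_Gamma where
  "limsup_Gamma Y U f y0 = {\<gamma> \<in> prob_on (Gset Y U f). \<exists>(T :: nat \<Rightarrow> nat) gs.
      filterlim T at_top sequentially \<and> (\<forall>i. gs i \<in> Gamma Y U f (T i) y0) \<and>
      weak_conv (Gset Y U f) gs \<gamma>}"

definition limsup_Theta where
  "limsup_Theta Y U f y0 = {\<gamma> \<in> prob_on (Gset Y U f). \<exists>(\<alpha> :: nat \<Rightarrow> real) gs.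
      (\<forall>i. 0 < \<alpha> i \<and> \<alpha> i < 1) \<and> \<alpha> \<longlonglongrightarrow> 1 \<and> (\<forall>i. gs i \<in> Theta Y U f (\<alpha> i) y0) \<and>
      weak_conv (Gset Y U f) gs \<gamma>}"

end

theory Submission
  imports Defs
begin

(*
  Occupational measures are atomic: Gamma_T(y0) and Theta_alpha(y0) consist of measures
  sum_t w_t delta_(y(t), u(t)) along admissible trajectories. For such a measure the integral of
  phi o f - phi telescopes, to (phi (y T) - phi (y 0)) / T, resp. to (1 - alpha) / alpha times a
  discounted average of phi (y t) - phi (y 0); it therefore vanishes in the limit, which puts every
  weak* limit point into W. Reweighting the same atoms by (T - 1 - t) / T, resp. alpha ^ (t + 1),
  gives finite measures xi whose integral of phi o f - phi equals the integral of phi - phi (y0)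
  against the occupational measure; this converges to the corresponding integral against the limit,
  which is the defining property of W_2(y0).

  Nonemptiness is Krylov-Bogolyubov: the graph G is compact by upper semicontinuity, and the Cesaro
  averages along any admissible trajectory have a weak* convergent subsequence. This compactness is
  obtained from Helly's selection theorem: a compact metric space is a continuous image of a compact
  subset of the real line (coding points by ternary expansions of ball-membership digits), so the
  averages can be lifted to the line, where Helly applies, and the limit pushed back.
*)

section \<open>Atomic measures\<close>

definition atomic_measure :: "'c::topological_space set \<Rightarrow> (nat \<Rightarrow> real) \<Rightarrow> (nat \<Rightarrow> 'c) \<Rightarrow> 'c measure" where
  "atomic_measure K w p = distr (density (count_space UNIV) (\<lambda>n. ennreal (w n))) (restrict_space borel K) p"

lemma sets_atomic_measure [simp]: "sets (atomic_measure K w p) = sets (restrict_space borel K)"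
  by (simp add: atomic_measure_def)

lemma measurable_points_restrict_space:
  "(\<And>n. p n \<in> K) \<Longrightarrow> p \<in> measurable (count_space UNIV) (restrict_space borel K)"
  by (simp add: measurable_count_space_eq1 space_restrict_space)

lemma emeasure_atomic_measure:
  assumes p: "\<And>n. p n \<in> K" and w: "\<And>n. 0 \<le> w n" "summable w"
    and A: "A \<in> sets (restrict_space borel K)"
  shows "emeasure (atomic_measure K w p) A = ennreal (\<Sum>n. w n * indicator A (p n))"
proof -
  have "emeasure (atomic_measure K w p) A
      = (\<integral>\<^sup>+n. ennreal (w n) * indicator (p -` A) n \<partial>count_space UNIV)"
    unfolding atomic_measure_def using measurable_points_restrict_space[of p, OF p] A
    by (simp add: emeasure_distr emeasure_density)
  also have "\<dots> = (\<Sum>n. ennreal (w n * indicator A (p n)))"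
    by (simp add: nn_integral_count_space_nat) (intro suminf_cong, simp add: indicator_def)
  also have "\<dots> = ennreal (\<Sum>n. w n * indicator A (p n))"
  proof (rule suminf_ennreal2)
    show "summable (\<lambda>n. w n * indicator A (p n))"
      by (rule summable_comparison_test'[OF w(2), where N=0]) (use w(1) in \<open>auto simp: indicator_def\<close>)
  qed (use w(1) in auto)
  finally show ?thesis .
qed

lemma integral_atomic_measure:
  fixes g :: "'c::topological_space \<Rightarrow> real"
  assumes p: "\<And>n. p n \<in> K" and w: "\<And>n. 0 \<le> w n" "summable w"
    and g: "g \<in> borel_measurable (restrict_space borel K)" and B: "\<And>x. x \<in> K \<Longrightarrow> \<bar>g x\<bar> \<le> B"
  shows "integral\<^sup>L (atomic_measure K w p) g = (\<Sum>n. w n * g (p n))"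
proof -
  have "summable (\<lambda>n. norm (w n * g (p n)))"
  proof (rule summable_comparison_test'[OF summable_mult[OF w(2), of B], where N=0])
    fix n
    show "norm (norm (w n * g (p n))) \<le> B * w n"
      using mult_left_mono[OF B[OF p] w(1)] w(1) by (simp add: abs_mult mult.commute)
  qed
  then have "integrable (count_space UNIV) (\<lambda>n. w n *\<^sub>R g (p n))"
    by (simp add: integrable_count_space_nat_iff)
  then show ?thesis
    unfolding atomic_measure_def using measurable_points_restrict_space[of p, OF p] g w
    by (simp add: integral_distr integral_density integral_count_space_nat)
qed

lemma integral_atomic_measure_continuous:
  fixes g :: "'c::metric_space \<Rightarrow> real"
  assumes "compact K" "continuous_on K g" "\<And>n. p n \<in> K" "\<And>n. 0 \<le> w n" "summable w"
  shows "integral\<^sup>L (atomic_measure K w p) g = (\<Sum>n. w n * g (p n))"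
proof -
  obtain B where "\<And>x. x \<in> K \<Longrightarrow> \<bar>g x\<bar> \<le> B"
    using compact_imp_bounded[OF compact_continuous_image[OF assms(2,1)]]
    by (auto simp: bounded_iff)
  then show ?thesis
    using assms by (intro integral_atomic_measure borel_measurable_continuous_on_restrict)
qed

lemma finite_measure_atomic_measure:
  assumes p: "\<And>n. p n \<in> K" and w: "\<And>n. 0 \<le> w n" "summable w"
  shows "finite_measure (atomic_measure K w p)"
proof -
  have "emeasure (density (count_space UNIV) (\<lambda>n. ennreal (w n))) UNIV = ennreal (\<Sum>n. w n)"
    using w by (simp add: emeasure_density nn_integral_count_space_nat suminf_ennreal2)
  then have "finite_measure (density (count_space UNIV) (\<lambda>n. ennreal (w n)))"
    by (intro finite_measureI) auto
  then show ?thesis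
    unfolding atomic_measure_def
    using measurable_points_restrict_space[of p, OF p] by (intro finite_measure.finite_measure_distr) auto
qed

lemma atomic_measure_in_fin_on:
  "(\<And>n. p n \<in> K) \<Longrightarrow> (\<And>n. 0 \<le> w n) \<Longrightarrow> summable w \<Longrightarrow> atomic_measure K w p \<in> fin_on K"
  by (simp add: fin_on_def finite_measure_atomic_measure)

lemma atomic_measure_in_prob_on:
  assumes p: "\<And>n. p n \<in> K" and w: "\<And>n. 0 \<le> w n" "summable w" "suminf w = 1"
  shows "atomic_measure K w p \<in> prob_on K"
proof -
  have "K \<in> sets (restrict_space borel K)"
    using sets.top[of "restrict_space borel K"] by (simp add: space_restrict_space)
  then have "emeasure (atomic_measure K w p) K = 1"
    using emeasure_atomic_measure[of p K, OF p w(1,2)] p w(3) by simp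
  then show ?thesis
    unfolding prob_on_def by (auto intro!: prob_spaceI simp: atomic_measure_def space_restrict_space)
qed

lemma AE_atomic_measure:
  assumes p: "\<And>n. p n \<in> K" "\<And>n. p n \<in> A" and w: "\<And>n. 0 \<le> w n" "summable w"
    and A: "A \<in> sets borel"
  shows "AE x in atomic_measure K w p. x \<in> A"
proof (rule AE_I')
  have "K - A = K \<inter> (UNIV - A)" "UNIV - A \<in> sets borel"
    using A by auto
  then have "K - A \<in> sets (restrict_space borel K)"
    unfolding sets_restrict_space by blast
  then show "K - A \<in> null_sets (atomic_measure K w p)"
    using p by (simp add: emeasure_atomic_measure[of p, OF p(1) w] null_sets_def)
qed (auto simp: atomic_measure_def space_restrict_space)

lemma atomic_measure_eqI:
  assumes sets: "sets M = sets (restrict_space borel K)"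
    and p: "\<And>n. p n \<in> K" and w: "\<And>n. 0 \<le> w n" "summable w"
    and emeasure: "\<And>A. A \<in> sets M \<Longrightarrow> emeasure M A = ennreal (\<Sum>n. w n * indicator A (p n))"
  shows "M = atomic_measure K w p"
  by (rule measure_eqI) (use sets emeasure emeasure_atomic_measure[OF p w] in auto)

section \<open>Compact metric spaces as continuous images of compact subsets of the real line\<close>

definition ternary :: "(nat \<Rightarrow> bool) \<Rightarrow> real" where
  "ternary b = (\<Sum>k. if b k then 2 / 3 ^ Suc k else 0)"

lemma sums_two_thirds_power: "(\<lambda>k. 2 / 3 ^ Suc (k + m)) sums (1 / 3 ^ m :: real)"
proof -
  have "(\<lambda>k. (2 / 3 ^ Suc m) * (1 / 3) ^ k) sums ((2 / 3 ^ Suc m) * (1 / (1 - 1 / 3 :: real)))"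
    by (intro sums_mult geometric_sums) simp
  then show ?thesis
    by (simp add: power_add power_divide field_simps)
qed

lemma summable_ternary: "summable (\<lambda>k. if b k then 2 / 3 ^ Suc k else 0 :: real)"
  by (rule summable_comparison_test'[OF sums_summable[OF sums_two_thirds_power[of 0]], where N=0]) auto

lemma ternary_bounds: "ternary b \<in> {0..1}"
proof -
  have "ternary b \<le> (\<Sum>k. 2 / 3 ^ Suc (k + 0))"
    unfolding ternary_def
    by (rule suminf_le[OF _ summable_ternary sums_summable[OF sums_two_thirds_power]]) auto
  moreover have "0 \<le> ternary b"
    unfolding ternary_def by (rule suminf_nonneg[OF summable_ternary]) auto
  ultimately show ?thesis
    using sums_unique[OF sums_two_thirds_power[of 0]] by simp
qed

lemma ternary_separation:
  assumes agree: "\<And>k. k < n \<Longrightarrow> a k = b k" and differ: "a n \<noteq> b n"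
  shows "1 / 3 ^ Suc n \<le> \<bar>ternary a - ternary b\<bar>"
proof -
  define d where "d k = (if a k then 2 / 3 ^ Suc k else 0) - (if b k then 2 / 3 ^ Suc k else (0::real))" for k
  have "summable d"
    unfolding d_def by (intro summable_diff summable_ternary)
  have "ternary a - ternary b = suminf d"
    unfolding ternary_def d_def by (rule suminf_diff[OF summable_ternary summable_ternary])
  also have "\<dots> = (\<Sum>j. d (j + Suc n)) + (\<Sum>k<Suc n. d k)"
    by (rule suminf_split_initial_segment[OF \<open>summable d\<close>])
  also have "(\<Sum>k<Suc n. d k) = d n"
    using agree by (simp add: d_def)
  finally have split: "ternary a - ternary b = (\<Sum>j. d (j + Suc n)) + d n" .
  have d_bound: "\<bar>d k\<bar> \<le> 2 / 3 ^ Suc k" for k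
    by (simp add: d_def)
  have tail: "summable (\<lambda>j. 2 / 3 ^ Suc (j + Suc n) :: real)"
    using sums_summable[OF sums_two_thirds_power] .
  have "summable (\<lambda>j. norm (d (j + Suc n)))"
    by (rule summable_comparison_test'[OF tail, where N=0]) (use d_bound in \<open>simp only: real_norm_def abs_abs\<close>)
  then have "\<bar>\<Sum>j. d (j + Suc n)\<bar> \<le> (\<Sum>j. \<bar>d (j + Suc n)\<bar>)"
    using summable_norm by fastforce
  also have "\<dots> \<le> (\<Sum>j. 2 / 3 ^ Suc (j + Suc n))"
    using \<open>summable (\<lambda>j. norm (d (j + Suc n)))\<close>
    by (intro suminf_le[OF _ _ tail]) (simp_all only: real_norm_def d_bound)
  also have "\<dots> = 1 / 3 ^ Suc n"
    by (rule sums_unique[OF sums_two_thirds_power, symmetric])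
  finally have "\<bar>\<Sum>j. d (j + Suc n)\<bar> \<le> 1 / 3 ^ Suc n" .
  moreover have "\<bar>d n\<bar> = 2 / 3 ^ Suc n"
    using differ by (auto simp: d_def)
  ultimately show ?thesis
    using split by linarith
qed

lemma compact_metric_real_code:
  fixes K :: "'c::metric_space set"
  assumes "compact K"
  obtains c :: "'c \<Rightarrow> real" where "c ` K \<subseteq> {0..1}"
    and "\<And>e. e > 0 \<Longrightarrow> \<exists>d>0. \<forall>x\<in>K. \<forall>x'\<in>K. \<bar>c x - c x'\<bar> < d \<longrightarrow> dist x x' < e"
proof -
  have "\<exists>qs. set qs \<subseteq> K \<and> K \<subseteq> (\<Union>q\<in>set qs. ball q (1 / Suc m))" for m
  proof -
    obtain C where "C \<subseteq> K" "finite C" "K \<subseteq> (\<Union>q\<in>C. ball q (1 / Suc m))"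
      by (rule compactE_image[OF assms, of K "\<lambda>q. ball q (1 / Suc m)"]) auto
    then show ?thesis
      by (metis finite_list)
  qed
  then obtain L where L: "\<And>m. set (L m) \<subseteq> K" "\<And>m. K \<subseteq> (\<Union>q\<in>set (L m). ball q (1 / Suc m))"
    by metis
  \<comment> \<open>digit number \<open>prod_encode (m, j)\<close> of \<open>x\<close> records whether \<open>x\<close> lies within \<open>1 / Suc m\<close> of \<open>L m ! j\<close>\<close>
  define digits where "digits x n = (case prod_decode n of (m, j) \<Rightarrow>
      j < length (L m) \<and> dist x (L m ! j) < 1 / Suc m)" for x n
  define c where "c x = ternary (digits x)" for x
  have "\<exists>d>0. \<forall>x\<in>K. \<forall>x'\<in>K. \<bar>c x - c x'\<bar> < d \<longrightarrow> dist x x' < e" if "e > 0" for e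
  proof -
    obtain m where m: "1 / Suc m < e / 2"
      using \<open>e > 0\<close> by (metis half_gt_zero nat_approx_posE)
    define N where "N = Max (insert 0 ((\<lambda>j. prod_encode (m, j)) ` {..<length (L m)}))"
    have N: "prod_encode (m, j) \<le> N" if "j < length (L m)" for j
      unfolding N_def using that by (intro Max_ge) auto
    show ?thesis
    proof (intro exI[of _ "1 / 3 ^ Suc N"] conjI ballI impI)
      fix x x' assume x: "x \<in> K" and x': "x' \<in> K" and close: "\<bar>c x - c x'\<bar> < 1 / 3 ^ Suc N"
      have agree: "digits x n = digits x' n" if "n \<le> N" for n
      proof (rule ccontr)
        assume "digits x n \<noteq> digits x' n"
        then obtain k where k: "k \<le> n" "\<And>i. i < k \<Longrightarrow> digits x i = digits x' i" "digits x k \<noteq> digits x' k"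
          using ex_least_nat_le[of "\<lambda>i. digits x i \<noteq> digits x' i" n] by blast
        have "1 / (3::real) ^ Suc N \<le> 1 / 3 ^ Suc k"
          using k(1) that by (intro divide_left_mono power_increasing) auto
        also have "\<dots> \<le> \<bar>c x - c x'\<bar>"
          unfolding c_def by (rule ternary_separation) (use k in auto)
        finally show False
          using close by linarith
      qed
      obtain q where "q \<in> set (L m)" "dist x q < 1 / Suc m"
        using L(2)[of m] x by (auto simp: dist_commute)
      then obtain j where j: "j < length (L m)" "dist x (L m ! j) < 1 / Suc m"
        by (metis in_set_conv_nth)
      then have "digits x (prod_encode (m, j))"
        by (simp add: digits_def)
      then have "digits x' (prod_encode (m, j))"
        using agree[OF N[OF j(1)]] by simp
      then have "dist x' (L m ! j) < 1 / Suc m"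
        by (simp add: digits_def)
      then have "dist x x' < 2 / Suc m"
        using j(2) dist_triangle3[of x x' "L m ! j"] by (simp add: dist_commute)
      then show "dist x x' < e"
        using m by simp
    qed simp
  qed
  moreover have "c ` K \<subseteq> {0..1}"
    using ternary_bounds by (auto simp: c_def)
  ultimately show ?thesis
    using that by blast
qed

lemma compact_metric_continuous_image_of_compact_real:
  fixes K :: "'c::metric_space set"
  assumes "compact K"
  obtains D :: "real set" and \<pi> :: "real \<Rightarrow> 'c" where "compact D" "continuous_on D \<pi>" "\<pi> ` D = K"
proof -
  obtain c :: "'c \<Rightarrow> real" where c01: "c ` K \<subseteq> {0..1}"
    and c_inverse: "\<And>e. e > 0 \<Longrightarrow> \<exists>d>0. \<forall>x\<in>K. \<forall>x'\<in>K. \<bar>c x - c x'\<bar> < d \<longrightarrow> dist x x' < e"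
    using compact_metric_real_code[OF assms] by blast
  define graph where "graph = closure ((\<lambda>x. (c x, x)) ` K)"
  have graph_sub: "graph \<subseteq> {0..1} \<times> K"
    unfolding graph_def using c01 compact_imp_closed[OF assms]
    by (intro closure_minimal closed_Times) auto
  have "compact (({0..1} \<times> K) \<inter> graph)"
    unfolding graph_def by (intro compact_Int_closed compact_Times compact_Icc assms closed_closure)
  then have "compact graph"
    using graph_sub by (simp add: Int_absorb1)
  have approx: "\<exists>x\<in>K. \<bar>c x - fst p\<bar> < r \<and> dist x (snd p) < r" if pr: "p \<in> graph" "r > 0" for p r
  proof -
    obtain x where "x \<in> K" "dist (c x, x) p < r"
      using pr unfolding graph_def closure_approachable by blast
    then show ?thesis
      using dist_fst_le[of "(c x, x)" p] dist_snd_le[of "(c x, x)" p]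
      by (intro bexI[of _ x]) (auto simp: dist_real_def)
  qed
  have "inj_on fst graph"
  proof (rule inj_onI)
    fix p p' assume p: "p \<in> graph" and p': "p' \<in> graph" and "fst p = fst p'"
    have "dist (snd p) (snd p') < e" if "e > 0" for e
    proof -
      obtain d where "d > 0" and d: "\<forall>x\<in>K. \<forall>x'\<in>K. \<bar>c x - c x'\<bar> < d \<longrightarrow> dist x x' < e / 3"
        using c_inverse[of "e / 3"] \<open>e > 0\<close> by auto
      obtain x where x: "x \<in> K" "\<bar>c x - fst p\<bar> < min (d / 2) (e / 3)" "dist x (snd p) < min (d / 2) (e / 3)"
        using approx[OF p, of "min (d / 2) (e / 3)"] \<open>d > 0\<close> \<open>e > 0\<close> by auto
      obtain x' where x': "x' \<in> K" "\<bar>c x' - fst p'\<bar> < min (d / 2) (e / 3)" "dist x' (snd p') < min (d / 2) (e / 3)"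
        using approx[OF p', of "min (d / 2) (e / 3)"] \<open>d > 0\<close> \<open>e > 0\<close> by auto
      have "\<bar>c x - c x'\<bar> < d"
        using x(2) x'(2) \<open>fst p = fst p'\<close> by linarith
      then have "dist x x' < e / 3"
        using d x(1) x'(1) by blast
      then show ?thesis
        using x(3) x'(3) dist_triangle3[of "snd p" "snd p'" x] dist_triangle[of x "snd p'" x']
        by (simp add: dist_commute)
    qed
    then have "snd p = snd p'"
      using zero_less_dist_iff by blast
    then show "p = p'"
      using \<open>fst p = fst p'\<close> by (simp add: prod_eq_iff)
  qed
  then have "continuous_on (fst ` graph) (inv_into graph fst)"
    using \<open>compact graph\<close> by (intro continuous_on_inv continuous_on_fst continuous_on_id) auto
  then have "continuous_on (fst ` graph) (snd \<circ> inv_into graph fst)"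
    by (intro continuous_on_compose continuous_on_snd continuous_on_id) auto
  moreover have "(snd \<circ> inv_into graph fst) ` fst ` graph = K"
  proof -
    have "(snd \<circ> inv_into graph fst) ` fst ` graph = snd ` graph"
      using \<open>inj_on fst graph\<close> by (force simp: image_comp)
    moreover have "K \<subseteq> snd ` graph"
      using closure_subset[of "(\<lambda>x. (c x, x)) ` K"] by (force simp: graph_def)
    ultimately show ?thesis
      using graph_sub by auto
  qed
  ultimately show ?thesis
    using that compact_continuous_image[OF continuous_on_fst[OF continuous_on_id] \<open>compact graph\<close>]
    by auto
qed

section \<open>Weak sequential compactness of atomic probability measures\<close>

lemma weak_conv_m_AE_mem_closed:
  fixes \<nu> :: "nat \<Rightarrow> real measure"
  assumes \<nu>: "\<And>n. real_distribution (\<nu> n)" and M: "real_distribution M" and conv: "weak_conv_m \<nu> M"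
    and D: "closed D" "D \<noteq> {}" and supp: "\<And>n. AE z in \<nu> n. z \<in> D"
  shows "AE z in M. z \<in> D"
proof -
  interpret M: real_distribution M by (rule M)
  define h where "h z = min 1 (infdist z D)" for z
  have h_cont: "isCont h z" for z
    unfolding h_def by (intro continuous_intros)
  have h_bound: "norm (h z) \<le> 1" for z
    unfolding h_def using infdist_nonneg[of z D] by auto
  have h_meas: "h \<in> borel_measurable borel"
    using h_cont by (intro borel_measurable_continuous_onI continuous_at_imp_continuous_on) auto
  have "integral\<^sup>L (\<nu> n) h = 0" for n
    using supp[of n] by (intro integral_eq_zero_AE) (auto simp: h_def)
  moreover have "(\<lambda>n. integral\<^sup>L (\<nu> n) h) \<longlonglongrightarrow> integral\<^sup>L M h"
    using weak_conv_imp_integral_bdd_continuous_conv[OF \<nu> M conv h_cont h_bound] .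
  ultimately have "(\<lambda>n. 0) \<longlonglongrightarrow> integral\<^sup>L M h"
    by simp
  then have "integral\<^sup>L M h = 0"
    by (simp add: LIMSEQ_const_iff)
  moreover have "integrable M h"
    using h_bound h_meas by (intro M.integrable_const_bound[where B=1]) auto
  ultimately have "AE z in M. h z = 0"
    using integral_nonneg_eq_0_iff_AE[of M h] by (simp add: h_def infdist_nonneg)
  then show ?thesis
  proof (rule AE_mp, intro AE_I2 impI)
    fix z assume "h z = 0"
    then have "infdist z D = 0"
      by (simp add: h_def min_def split: if_splits)
    then show "z \<in> D"
      using in_closed_iff_infdist_zero[OF D] by blast
  qed
qed

lemma atomic_real_distributions_weak_conv_subseq:
  fixes q w :: "nat \<Rightarrow> nat \<Rightarrow> real"
  assumes D: "compact D" and q: "\<And>n t. q n t \<in> D"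
    and w: "\<And>n t. 0 \<le> w n t" "\<And>n. summable (w n)" "\<And>n. suminf (w n) = 1"
  obtains r M where "strict_mono r" "real_distribution M" "AE z in M. z \<in> D"
    "\<And>\<psi> B. continuous_on UNIV \<psi> \<Longrightarrow> (\<And>z. \<bar>\<psi> z\<bar> \<le> B) \<Longrightarrow>
       (\<lambda>k. \<Sum>t. w (r k) t * \<psi> (q (r k) t)) \<longlonglongrightarrow> integral\<^sup>L M \<psi>"
proof -
  define \<nu> where "\<nu> n = atomic_measure UNIV (w n) (q n)" for n
  have \<nu>: "real_distribution (\<nu> n)" for n
    using atomic_measure_in_prob_on[of "q n" UNIV "w n"] w
    by (simp add: \<nu>_def prob_on_def real_distribution_def real_distribution_axioms_def)
  have integral_\<nu>: "integral\<^sup>L (\<nu> n) \<psi> = (\<Sum>t. w n t * \<psi> (q n t))"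
    if "continuous_on UNIV \<psi>" "\<And>z. \<bar>\<psi> z\<bar> \<le> B" for \<psi> B n
    unfolding \<nu>_def using that w
    by (intro integral_atomic_measure)
      (auto simp: measurable_cong_sets[OF sets_restrict_UNIV refl] intro: borel_measurable_continuous_onI)
  obtain a b where "D \<subseteq> {a<..b}" "a < b"
  proof -
    obtain R where "\<forall>z\<in>D. \<bar>z\<bar> \<le> R"
      using compact_imp_bounded[OF D] by (auto simp: bounded_iff)
    then show ?thesis
      using q[of 0 0] by (intro that[of "- R - 1" "R + 1"]) force+
  qed
  have measure_ab: "measure (\<nu> n) {a<..b} = 1" for n
  proof -
    interpret real_distribution "\<nu> n" by (rule \<nu>)
    have "AE z in \<nu> n. z \<in> {a<..b}"
      unfolding \<nu>_def
    proof (rule AE_atomic_measure[OF _ _ w(1,2)])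
      show "q n t \<in> {a<..b}" for t
        using q \<open>D \<subseteq> {a<..b}\<close> by blast
    qed auto
    then show ?thesis
      by (simp add: prob_eq_1)
  qed
  have "tight \<nu>"
    unfolding tight_def
  proof (intro conjI allI impI)
    show "\<exists>a b. a < b \<and> (\<forall>n. 1 - e < measure (\<nu> n) {a<..b})" if "e > 0" for e :: real
      using \<open>a < b\<close> measure_ab that by (intro exI[of _ a] exI[of _ b]) simp
  qed (rule \<nu>)
  then obtain r M where r: "strict_mono r" and M: "real_distribution M" and conv: "weak_conv_m (\<nu> \<circ> r) M"
    using tight_imp_convergent_subsubsequence[of \<nu> id] by (auto simp: strict_mono_def)
  have "AE z in M. z \<in> D"
  proof (rule weak_conv_m_AE_mem_closed[OF _ M conv compact_imp_closed[OF D]])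
    show "D \<noteq> {}"
      using q by blast
    show "AE z in (\<nu> \<circ> r) n. z \<in> D" for n
      unfolding \<nu>_def o_def
      by (rule AE_atomic_measure[OF _ q w(1,2)]) (auto intro: borel_closed compact_imp_closed[OF D])
  qed (simp add: \<nu>)
  moreover have "(\<lambda>k. \<Sum>t. w (r k) t * \<psi> (q (r k) t)) \<longlonglongrightarrow> integral\<^sup>L M \<psi>"
    if \<psi>: "continuous_on UNIV \<psi>" "\<And>z. \<bar>\<psi> z\<bar> \<le> B" for \<psi> B
  proof -
    have "(\<lambda>k. integral\<^sup>L (\<nu> (r k)) \<psi>) \<longlonglongrightarrow> integral\<^sup>L M \<psi>"
      using weak_conv_imp_integral_bdd_continuous_conv[of "\<nu> \<circ> r" M \<psi> B] \<nu> M conv \<psi>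
      by (simp add: continuous_on_eq_continuous_at)
    then show ?thesis
      using integral_\<nu>[OF \<psi>] by simp
  qed
  ultimately show ?thesis
    using that r M by blast
qed

lemma atomic_prob_measures_weak_conv_subseq:
  fixes K :: "'c::metric_space set" and p :: "nat \<Rightarrow> nat \<Rightarrow> 'c" and w :: "nat \<Rightarrow> nat \<Rightarrow> real"
  assumes K: "compact K" and p: "\<And>n t. p n t \<in> K"
    and w: "\<And>n t. 0 \<le> w n t" "\<And>n. summable (w n)" "\<And>n. suminf (w n) = 1"
  obtains r \<gamma> where "strict_mono r" "\<gamma> \<in> prob_on K"
    "weak_conv K (\<lambda>k. atomic_measure K (w (r k)) (p (r k))) \<gamma>"
proof -
  obtain D :: "real set" and \<pi> where D: "compact D" and \<pi>: "continuous_on D \<pi>" "\<pi> ` D = K"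
    by (rule compact_metric_continuous_image_of_compact_real[OF K])
  have "\<forall>x\<in>K. \<exists>z. z \<in> D \<and> \<pi> z = x"
    using \<pi>(2) by (auto simp: image_iff)
  from bchoice[OF this] obtain c where c: "\<forall>x\<in>K. c x \<in> D \<and> \<pi> (c x) = x"
    by blast
  obtain r M where r: "strict_mono r" and M: "real_distribution M" and M_D: "AE z in M. z \<in> D"
    and conv: "\<And>\<psi> B. continuous_on UNIV \<psi> \<Longrightarrow> (\<And>z. \<bar>\<psi> z\<bar> \<le> B) \<Longrightarrow>
      (\<lambda>k. \<Sum>t. w (r k) t * \<psi> (c (p (r k) t))) \<longlonglongrightarrow> integral\<^sup>L M \<psi>"
    using atomic_real_distributions_weak_conv_subseq[OF D, of "\<lambda>n t. c (p n t)" w] c p w by blast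
  interpret M: real_distribution M by (rule M)
  define lift where "lift z = (if z \<in> D then \<pi> z else p 0 0)" for z
  have lift: "lift \<in> measurable M (restrict_space borel K)"
  proof (rule measurable_restrict_space2)
    show "lift \<in> space M \<rightarrow> K"
      using \<pi>(2) p by (auto simp: lift_def)
    have "lift \<in> borel_measurable borel"
      unfolding lift_def using compact_imp_closed[OF D] \<pi>(1)
      by (intro borel_measurable_continuous_on_if) auto
    then show "lift \<in> borel_measurable M"
      by (simp add: measurable_cong_sets[OF M.events_eq_borel refl])
  qed
  define \<gamma> where "\<gamma> = distr M (restrict_space borel K) lift"
  have "\<gamma> \<in> prob_on K"
    unfolding prob_on_def \<gamma>_def using M.prob_space_distr[OF lift] by simp
  moreover have "weak_conv K (\<lambda>k. atomic_measure K (w (r k)) (p (r k))) \<gamma>"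
    unfolding weak_conv_def
  proof (intro allI impI)
    fix \<phi> :: "'c \<Rightarrow> real" assume \<phi>: "continuous_on K \<phi>"
    obtain B where B: "\<And>x. x \<in> K \<Longrightarrow> \<bar>\<phi> x\<bar> \<le> B"
      using compact_imp_bounded[OF compact_continuous_image[OF \<phi> K]] by (auto simp: bounded_iff)
    have "0 \<le> B"
      using B[OF p[of 0 0]] by linarith
    have \<phi>\<pi>: "continuous_on D (\<lambda>z. \<phi> (\<pi> z))"
      using continuous_on_compose2[OF \<phi> \<pi>(1)] \<pi>(2) by blast
    have D_closed: "closedin (top_of_set UNIV) D"
      using compact_imp_closed[OF D] by simp
    have \<phi>\<pi>_bound: "norm (\<phi> (\<pi> z)) \<le> B" if "z \<in> D" for z
      using B \<pi>(2) that by auto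
    obtain \<psi> where \<psi>: "continuous_on UNIV \<psi>" "\<And>z. z \<in> D \<Longrightarrow> \<psi> z = \<phi> (\<pi> z)"
      and \<psi>_norm: "\<And>z. z \<in> UNIV \<Longrightarrow> norm (\<psi> z) \<le> B"
      using Tietze[OF \<phi>\<pi> D_closed \<open>0 \<le> B\<close> \<phi>\<pi>_bound] by blast
    have \<psi>_bound: "\<bar>\<psi> z\<bar> \<le> B" for z
      using \<psi>_norm by simp
    have \<phi>_meas: "\<phi> \<in> borel_measurable (restrict_space borel K)"
      by (rule borel_measurable_continuous_on_restrict[OF \<phi>])
    have "integral\<^sup>L \<gamma> \<phi> = integral\<^sup>L M (\<lambda>z. \<phi> (lift z))"
      unfolding \<gamma>_def by (rule integral_distr[OF lift \<phi>_meas])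
    also have "\<dots> = integral\<^sup>L M \<psi>"
    proof (rule integral_cong_AE)
      show "(\<lambda>z. \<phi> (lift z)) \<in> borel_measurable M"
        using \<phi>_meas lift by measurable
      show "\<psi> \<in> borel_measurable M"
        using borel_measurable_continuous_onI[OF \<psi>(1)]
        by (simp add: measurable_cong_sets[OF M.events_eq_borel refl])
      show "AE z in M. \<phi> (lift z) = \<psi> z"
        using M_D by eventually_elim (simp add: lift_def \<psi>(2))
    qed
    finally have integral_\<gamma>: "integral\<^sup>L \<gamma> \<phi> = integral\<^sup>L M \<psi>" .
    have "integral\<^sup>L (atomic_measure K (w n) (p n)) \<phi> = (\<Sum>t. w n t * \<psi> (c (p n t)))" for n
      using integral_atomic_measure_continuous[OF K \<phi>, of "p n" "w n"] p w c \<psi>(2) by simp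
    then show "(\<lambda>k. integral\<^sup>L (atomic_measure K (w (r k)) (p (r k))) \<phi>) \<longlonglongrightarrow> integral\<^sup>L \<gamma> \<phi>"
      using conv[OF \<psi>(1) \<psi>_bound] integral_\<gamma> by simp
  qed
  ultimately show ?thesis
    using that r by blast
qed

section \<open>Telescoping sums\<close>

lemma sum_weighted_telescope:
  fixes a :: "nat \<Rightarrow> real"
  shows "(\<Sum>s<T. (real T - 1 - real s) * (a (Suc s) - a s)) = (\<Sum>t<T. a t - a 0)"
proof (induction T)
  case (Suc T)
  have "(\<Sum>s<Suc T. (real (Suc T) - 1 - real s) * (a (Suc s) - a s))
      = (\<Sum>s<T. (real T - 1 - real s) * (a (Suc s) - a s)) + (\<Sum>s<T. a (Suc s) - a s)"
    by (simp add: sum.distrib[symmetric] algebra_simps)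
  also have "(\<Sum>s<T. a (Suc s) - a s) = a T - a 0"
    by (rule sum_lessThan_telescope)
  finally show ?case
    using Suc by simp
qed simp

lemma summable_geometric_times_bounded:
  fixes a :: "nat \<Rightarrow> real"
  assumes "\<bar>\<alpha>\<bar> < 1" and "\<And>t. \<bar>a t\<bar> \<le> B"
  shows "summable (\<lambda>t. \<alpha> ^ t * a t)"
proof (rule summable_comparison_test'[where N=0])
  show "summable (\<lambda>t. B * \<bar>\<alpha>\<bar> ^ t)"
    using assms(1) by (intro summable_mult summable_geometric) simp
  show "norm (\<alpha> ^ t * a t) \<le> B * \<bar>\<alpha>\<bar> ^ t" for t
    using mult_left_mono[OF assms(2)[of t], of "\<bar>\<alpha>\<bar> ^ t"] by (simp add: abs_mult power_abs mult.commute)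
qed

lemma suminf_discounted_telescope:
  fixes a :: "nat \<Rightarrow> real"
  assumes \<alpha>: "0 \<le> \<alpha>" "\<alpha> < 1" and a: "\<And>t. \<bar>a t\<bar> \<le> B"
  shows "(\<Sum>t. \<alpha> ^ Suc t * (a (Suc t) - a t)) = (\<Sum>t. (1 - \<alpha>) * \<alpha> ^ t * (a t - a 0))"
proof -
  have "\<bar>\<alpha>\<bar> < 1"
    using \<alpha> by simp
  define S where "S = (\<Sum>t. \<alpha> ^ t * a t)"
  have S: "(\<lambda>t. \<alpha> ^ t * a t) sums S"
    unfolding S_def using summable_geometric_times_bounded[OF \<open>\<bar>\<alpha>\<bar> < 1\<close> a] by (rule summable_sums)
  have "(\<lambda>t. \<alpha> ^ Suc t * a (Suc t)) sums (S - a 0)"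
    using S sums_Suc_iff[of "\<lambda>t. \<alpha> ^ t * a t" "S - a 0"] by simp
  from sums_diff[OF this sums_mult[OF S, of \<alpha>]]
  have lhs: "(\<lambda>t. \<alpha> ^ Suc t * (a (Suc t) - a t)) sums (S - a 0 - \<alpha> * S)"
    by (simp add: algebra_simps)
  have "(\<lambda>t. (1 - \<alpha>) * \<alpha> ^ t * (a t - a 0))
      = (\<lambda>t. (1 - \<alpha>) * (\<alpha> ^ t * a t - a 0 * \<alpha> ^ t))"
    by (simp add: fun_eq_iff algebra_simps)
  then have "(\<lambda>t. (1 - \<alpha>) * \<alpha> ^ t * (a t - a 0)) sums ((1 - \<alpha>) * (S - a 0 * (1 / (1 - \<alpha>))))"
    using \<open>\<bar>\<alpha>\<bar> < 1\<close> by (simp only:) (intro sums_mult sums_diff S geometric_sums, simp)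
  also have "(1 - \<alpha>) * (S - a 0 * (1 / (1 - \<alpha>))) = S - a 0 - \<alpha> * S"
    using \<alpha> by (simp add: field_simps)
  finally show ?thesis
    using lhs by (simp add: sums_unique[symmetric])
qed

lemma discounted_average_bound:
  fixes c :: "nat \<Rightarrow> real"
  assumes \<alpha>: "0 \<le> \<alpha>" "\<alpha> < 1" and c: "\<And>t. \<bar>c t\<bar> \<le> C"
  shows "\<bar>\<Sum>t. (1 - \<alpha>) * \<alpha> ^ t * c t\<bar> \<le> C"
proof -
  have "(\<lambda>t. C * ((1 - \<alpha>) * \<alpha> ^ t)) sums (C * ((1 - \<alpha>) * (1 / (1 - \<alpha>))))"
    using \<alpha> by (intro sums_mult geometric_sums) auto
  then have majorant: "(\<lambda>t. C * ((1 - \<alpha>) * \<alpha> ^ t)) sums C"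
    using \<alpha> by simp
  have bound: "\<bar>(1 - \<alpha>) * \<alpha> ^ t * c t\<bar> \<le> C * ((1 - \<alpha>) * \<alpha> ^ t)" for t
    using mult_left_mono[OF c[of t], of "(1 - \<alpha>) * \<alpha> ^ t"] \<alpha> by (simp add: abs_mult mult.commute)
  have "summable (\<lambda>t. \<bar>(1 - \<alpha>) * \<alpha> ^ t * c t\<bar>)"
    using bound by (intro summable_comparison_test'[OF sums_summable[OF majorant], where N=0]) simp
  then have "\<bar>\<Sum>t. (1 - \<alpha>) * \<alpha> ^ t * c t\<bar> \<le> (\<Sum>t. \<bar>(1 - \<alpha>) * \<alpha> ^ t * c t\<bar>)"
    by (rule summable_rabs)
  also have "\<dots> \<le> C"
    using suminf_le[OF bound _ sums_summable[OF majorant]] sums_unique[OF majorant]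
      \<open>summable (\<lambda>t. \<bar>(1 - \<alpha>) * \<alpha> ^ t * c t\<bar>)\<close> by simp
  finally show ?thesis .
qed

section \<open>Compactness of the constraint graph\<close>

lemma usc_on_closed_graph:
  fixes Y :: "'a::metric_space set" and U :: "'a \<Rightarrow> 'b::metric_space set"
  assumes usc: "usc_on Y U" and Y: "closed Y" and U: "\<And>y. y \<in> Y \<Longrightarrow> closed (U y)"
  shows "closed {(y, u). y \<in> Y \<and> u \<in> U y}"
  unfolding closed_sequential_limits
proof (intro allI impI, elim conjE)
  fix s and l :: "'a \<times> 'b"
  assume s: "\<forall>n. s n \<in> {(y, u). y \<in> Y \<and> u \<in> U y}" and "s \<longlonglongrightarrow> l"
  obtain y u where l: "l = (y, u)"
    by (cases l)
  have y_lim: "(\<lambda>n. fst (s n)) \<longlonglongrightarrow> y" and u_lim: "(\<lambda>n. snd (s n)) \<longlonglongrightarrow> u"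
    using tendsto_fst[OF \<open>s \<longlonglongrightarrow> l\<close>] tendsto_snd[OF \<open>s \<longlonglongrightarrow> l\<close>] l by auto
  have s_in: "fst (s n) \<in> Y" "snd (s n) \<in> U (fst (s n))" for n
    using s by (auto simp: case_prod_beta)
  have "y \<in> Y"
    using closed_sequentially[OF Y _ y_lim] s_in(1) by blast
  moreover have "u \<in> U y"
  proof (rule ccontr)
    assume "u \<notin> U y"
    moreover have "open (- U y)"
      using U[OF \<open>y \<in> Y\<close>] by auto
    ultimately obtain r where "r > 0" and r: "ball u r \<subseteq> - U y"
      by (meson ComplI openE)
    then have "U y \<subseteq> - cball u (r / 2)"
      by (auto simp: subset_iff)
    then obtain e where "e > 0" and e: "\<forall>y'\<in>Y. dist y' y < e \<longrightarrow> U y' \<subseteq> - cball u (r / 2)"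
      using usc \<open>y \<in> Y\<close> unfolding usc_on_def by (meson open_Compl closed_cball)
    have "\<forall>\<^sub>F n in sequentially. dist (fst (s n)) y < e \<and> dist (snd (s n)) u < r / 2"
      using \<open>r > 0\<close> by (intro eventually_conj tendstoD[OF y_lim \<open>e > 0\<close>] tendstoD[OF u_lim]) simp
    then obtain n where "dist (fst (s n)) y < e" "dist (snd (s n)) u < r / 2"
      unfolding eventually_sequentially by blast
    then show False
      using e s_in[of n] by (force simp: dist_commute)
  qed
  ultimately show "l \<in> {(y, u). y \<in> Y \<and> u \<in> U y}"
    using l by simp
qed

lemma compact_Gset:
  fixes Y :: "'a::metric_space set" and U0 :: "'b::metric_space set"
  assumes Y: "compact Y" and U0: "compact U0" and U: "\<forall>y\<in>Y. U y \<subseteq> U0 \<and> compact (U y)"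
    and usc: "usc_on Y U" and f: "continuous_on (UNIV \<times> U0) (\<lambda>(y, u). f y u)"
  shows "compact (Gset Y U f)"
proof -
  have "closed ((\<lambda>(y, u). f y u) -` Y \<inter> UNIV \<times> U0)"
    using f Y U0 by (intro closed_vimage_Int closed_Times closed_UNIV compact_imp_closed)
  moreover have "closed {(y, u). y \<in> Y \<and> u \<in> U y}"
    using U by (intro usc_on_closed_graph[OF usc compact_imp_closed[OF Y]] compact_imp_closed) auto
  ultimately have "closed (((\<lambda>(y, u). f y u) -` Y \<inter> UNIV \<times> U0) \<inter> {(y, u). y \<in> Y \<and> u \<in> U y})"
    by (rule closed_Int)
  then have "compact ((Y \<times> U0) \<inter> (((\<lambda>(y, u). f y u) -` Y \<inter> UNIV \<times> U0) \<inter> {(y, u). y \<in> Y \<and> u \<in> U y}))"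
    by (intro compact_Int_closed compact_Times Y U0)
  moreover have "Gset Y U f
      = (Y \<times> U0) \<inter> (((\<lambda>(y, u). f y u) -` Y \<inter> UNIV \<times> U0) \<inter> {(y, u). y \<in> Y \<and> u \<in> U y})"
    using U by (auto simp: Gset_def Aset_def)
  ultimately show ?thesis
    by simp
qed

section \<open>Occupational measures as atomic measures\<close>

lemma summable_truncated: "summable (\<lambda>t. if t < T then c t else 0 :: real)"
  by (rule summable_finite[of "{..<T}"]) auto

lemma suminf_truncated: "(\<Sum>t. (if t < T then c t else 0) * x t) = (\<Sum>t<T. c t * x t :: real)"
  by (subst suminf_finite[of "{..<T}"]) auto

definition cesaro_weights :: "nat \<Rightarrow> nat \<Rightarrow> real" where
  "cesaro_weights T = (\<lambda>t. if t < T then 1 / real T else 0)"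

lemma cesaro_weights_nonneg: "0 \<le> cesaro_weights T t"
  by (simp add: cesaro_weights_def)

lemma summable_cesaro_weights: "summable (cesaro_weights T)"
  unfolding cesaro_weights_def by (rule summable_truncated)

lemma suminf_cesaro_weights: "0 < T \<Longrightarrow> suminf (cesaro_weights T) = 1"
  using suminf_truncated[of T "\<lambda>_. 1 / real T" "\<lambda>_. 1"] by (simp add: cesaro_weights_def)

lemma integral_atomic_measure_truncated:
  fixes g :: "'c::metric_space \<Rightarrow> real"
  assumes "compact K" "continuous_on K g" "\<And>t. p t \<in> K" "\<And>t. t < T \<Longrightarrow> 0 \<le> c t"
  shows "integral\<^sup>L (atomic_measure K (\<lambda>t. if t < T then c t else 0) p) g = (\<Sum>t<T. c t * g (p t))"
  using integral_atomic_measure_continuous[OF assms(1-3), of "\<lambda>t. if t < T then c t else 0"] assms(4)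
  by (simp add: summable_truncated suminf_truncated)

lemma admissible_fin_in_Gset:
  "admissible_fin Y U f T y0 y u \<Longrightarrow> t < T \<Longrightarrow> (y t, u t) \<in> Gset Y U f"
  by (simp add: admissible_fin_def Gset_def)

lemma admissible_fin_states:
  assumes adm: "admissible_fin Y U f T y0 y u" and "0 < T" "t \<le> T"
  shows "y t \<in> Y"
proof (cases "t < T")
  case False
  then have "u (T - 1) \<in> Aset Y U f (y (T - 1))" "y t = f (y (T - 1)) (u (T - 1))"
    using adm \<open>0 < T\<close> \<open>t \<le> T\<close> by (auto simp: admissible_fin_def dest: spec[of _ "T - 1"])
  then show ?thesis
    by (simp add: Aset_def)
qed (use adm in \<open>simp add: admissible_fin_def\<close>)

lemma admissible_inf_in_Gset: "admissible_inf Y U f y0 y u \<Longrightarrow> (y t, u t) \<in> Gset Y U f"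
  by (simp add: admissible_inf_def Gset_def)

lemma Gamma_eq_atomic_measure:
  assumes "\<gamma> \<in> Gamma Y U f T y0"
  obtains y u p where "admissible_fin Y U f T y0 y u" "0 < T" "\<And>t. p t \<in> Gset Y U f"
    "\<And>t. t < T \<Longrightarrow> p t = (y t, u t)" "\<gamma> = atomic_measure (Gset Y U f) (cesaro_weights T) p"
proof -
  obtain y u where adm: "admissible_fin Y U f T y0 y u" and \<gamma>: "\<gamma> \<in> prob_on (Gset Y U f)"
    and emeasure_\<gamma>: "\<And>Q. Q \<in> sets \<gamma> \<Longrightarrow> emeasure \<gamma> Q = ennreal ((\<Sum>t<T. indicator Q (y t, u t)) / real T)"
    using assms unfolding Gamma_def by blast
  have "0 < T"
  proof (rule ccontr)
    assume "\<not> 0 < T"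
    then have "emeasure \<gamma> (space \<gamma>) = 0"
      using emeasure_\<gamma>[OF sets.top] by simp
    then show False
      using \<gamma> prob_space.emeasure_space_1 by (force simp: prob_on_def)
  qed
  \<comment> \<open>the points after time \<open>T - 1\<close> carry no weight; they only have to lie in \<open>Gset Y U f\<close>\<close>
  define p where "p t = (y (min t (T - 1)), u (min t (T - 1)))" for t
  have p: "p t \<in> Gset Y U f" for t
    using admissible_fin_in_Gset[OF adm] \<open>0 < T\<close> by (simp add: p_def)
  have p_less: "p t = (y t, u t)" if "t < T" for t
    using that by (simp add: p_def)
  have "\<gamma> = atomic_measure (Gset Y U f) (cesaro_weights T) p"
  proof (rule atomic_measure_eqI[OF _ p cesaro_weights_nonneg summable_cesaro_weights])
    show "sets \<gamma> = sets (restrict_space borel (Gset Y U f))"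
      using \<gamma> by (simp add: prob_on_def)
    show "emeasure \<gamma> Q = ennreal (\<Sum>t. cesaro_weights T t * indicator Q (p t))" if "Q \<in> sets \<gamma>" for Q
      using emeasure_\<gamma>[OF that] by (simp add: cesaro_weights_def suminf_truncated p_less sum_divide_distrib)
  qed
  then show ?thesis
    using that adm \<open>0 < T\<close> p p_less by blast
qed

lemma Theta_eq_atomic_measure:
  assumes "\<gamma> \<in> Theta Y U f \<alpha> y0" and \<alpha>: "0 \<le> \<alpha>" "\<alpha> < 1"
  obtains y u where "admissible_inf Y U f y0 y u"
    "\<gamma> = atomic_measure (Gset Y U f) (\<lambda>t. (1 - \<alpha>) * \<alpha> ^ t) (\<lambda>t. (y t, u t))"
proof -
  obtain y u where adm: "admissible_inf Y U f y0 y u" and \<gamma>: "\<gamma> \<in> prob_on (Gset Y U f)"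
    and emeasure_\<gamma>: "\<And>Q. Q \<in> sets \<gamma> \<Longrightarrow>
      emeasure \<gamma> Q = ennreal ((1 - \<alpha>) * (\<Sum>t. \<alpha> ^ t * indicator Q (y t, u t)))"
    using assms unfolding Theta_def by blast
  have geometric: "summable (\<lambda>t. \<alpha> ^ t)"
    using \<alpha> by (intro summable_geometric) simp
  have "\<gamma> = atomic_measure (Gset Y U f) (\<lambda>t. (1 - \<alpha>) * \<alpha> ^ t) (\<lambda>t. (y t, u t))"
  proof (rule atomic_measure_eqI)
    show "sets \<gamma> = sets (restrict_space borel (Gset Y U f))"
      using \<gamma> by (simp add: prob_on_def)
    show "(y t, u t) \<in> Gset Y U f" for t
      by (rule admissible_inf_in_Gset[OF adm])
    show "0 \<le> (1 - \<alpha>) * \<alpha> ^ t" for t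
      using \<alpha> by simp
    show "summable (\<lambda>t. (1 - \<alpha>) * \<alpha> ^ t)"
      using geometric by (rule summable_mult)
    show "emeasure \<gamma> Q = ennreal (\<Sum>t. (1 - \<alpha>) * \<alpha> ^ t * indicator Q (y t, u t))" if "Q \<in> sets \<gamma>" for Q
    proof -
      have "summable (\<lambda>t. \<alpha> ^ t * indicator Q (y t, u t))"
        by (rule summable_comparison_test'[OF geometric, where N=0]) (use \<alpha> in \<open>auto simp: indicator_def\<close>)
      then show ?thesis
        using emeasure_\<gamma>[OF that] suminf_mult[of _ "1 - \<alpha>"] by (simp add: mult.assoc)
    qed
  qed
  then show ?thesis
    using that adm by blast
qed

lemma atomic_measure_in_Gamma:
  assumes adm: "admissible_inf Y U f y0 y u" and "0 < T"
  shows "atomic_measure (Gset Y U f) (cesaro_weights T) (\<lambda>t. (y t, u t)) \<in> Gamma Y U f T y0"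
proof -
  note weights = cesaro_weights_nonneg summable_cesaro_weights suminf_cesaro_weights[OF \<open>0 < T\<close>]
  have "admissible_fin Y U f T y0 y u"
    using adm by (simp add: admissible_inf_def admissible_fin_def)
  moreover have "emeasure (atomic_measure (Gset Y U f) (cesaro_weights T) (\<lambda>t. (y t, u t))) Q
      = ennreal ((\<Sum>t<T. indicator Q (y t, u t)) / real T)"
    if "Q \<in> sets (restrict_space borel (Gset Y U f))" for Q
    using emeasure_atomic_measure[OF admissible_inf_in_Gset[OF adm] weights(1,2) that]
    by (simp add: cesaro_weights_def suminf_truncated sum_divide_distrib)
  ultimately show ?thesis
    unfolding Gamma_def using atomic_measure_in_prob_on[OF admissible_inf_in_Gset[OF adm] weights] by auto
qed

section \<open>Limits of occupational measures\<close>

locale compact_control_system =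
  fixes Y :: "'a::metric_space set" and U :: "'a \<Rightarrow> 'b::metric_space set" and f :: "'a \<Rightarrow> 'b \<Rightarrow> 'a"
  assumes compact_states: "compact Y"
    and compact_graph: "compact (Gset Y U f)"
    and continuous_dynamics: "continuous_on (Gset Y U f) (\<lambda>(y, u). f y u)"
begin

lemma
  fixes \<phi> :: "'a \<Rightarrow> real"
  assumes "continuous_on Y \<phi>"
  shows continuous_on_discrepancy: "continuous_on (Gset Y U f) (\<lambda>(y, u). \<phi> (f y u) - \<phi> y)"
    and continuous_on_offset: "continuous_on (Gset Y U f) (\<lambda>(y, u). \<phi> y - c)"
proof -
  have f: "continuous_on (Gset Y U f) (\<lambda>z. \<phi> ((\<lambda>(y, u). f y u) z))"
    by (rule continuous_on_compose2[OF assms continuous_dynamics]) (auto simp: Gset_def Aset_def)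
  have fst: "continuous_on (Gset Y U f) (\<lambda>z. \<phi> (fst z))"
    by (rule continuous_on_compose2[OF assms continuous_on_fst[OF continuous_on_id]]) (auto simp: Gset_def)
  show "continuous_on (Gset Y U f) (\<lambda>(y, u). \<phi> (f y u) - \<phi> y)"
    using continuous_on_diff[OF f fst] by (simp add: case_prod_beta)
  show "continuous_on (Gset Y U f) (\<lambda>(y, u). \<phi> y - c)"
    using continuous_on_diff[OF fst continuous_on_const] by (simp add: case_prod_beta)
qed

lemma bounded_on_states:
  fixes \<phi> :: "'a \<Rightarrow> real"
  assumes "continuous_on Y \<phi>"
  obtains B where "\<And>y. y \<in> Y \<Longrightarrow> \<bar>\<phi> y\<bar> \<le> B"
  using compact_imp_bounded[OF compact_continuous_image[OF assms compact_states]] by (auto simp: bounded_iff)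

lemma Gamma_discrepancy_bound:
  fixes \<phi> :: "'a \<Rightarrow> real"
  assumes \<gamma>: "\<gamma> \<in> Gamma Y U f T y0" and \<phi>: "continuous_on Y \<phi>" and B: "\<And>y. y \<in> Y \<Longrightarrow> \<bar>\<phi> y\<bar> \<le> B"
  shows "\<bar>integral\<^sup>L \<gamma> (\<lambda>(y, u). \<phi> (f y u) - \<phi> y)\<bar> \<le> 2 * B / T"
proof -
  obtain y u p where adm: "admissible_fin Y U f T y0 y u" and "0 < T" and p: "\<And>t. p t \<in> Gset Y U f"
    and p_less: "\<And>t. t < T \<Longrightarrow> p t = (y t, u t)" and \<gamma>_eq: "\<gamma> = atomic_measure (Gset Y U f) (cesaro_weights T) p"
    using Gamma_eq_atomic_measure[OF \<gamma>] by blast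
  have "integral\<^sup>L \<gamma> (\<lambda>(y, u). \<phi> (f y u) - \<phi> y) = (\<Sum>t<T. 1 / real T * (\<phi> (y (Suc t)) - \<phi> (y t)))"
    unfolding \<gamma>_eq cesaro_weights_def using adm
    by (simp add: integral_atomic_measure_truncated[OF compact_graph continuous_on_discrepancy[OF \<phi>] p]
        p_less admissible_fin_def)
  also have "\<dots> = (\<phi> (y T) - \<phi> (y 0)) / T"
    using sum_lessThan_telescope[of "\<lambda>t. \<phi> (y t)" T] by (simp add: sum_divide_distrib[symmetric])
  finally show ?thesis
    using B[OF admissible_fin_states[OF adm \<open>0 < T\<close>, of 0]] B[OF admissible_fin_states[OF adm \<open>0 < T\<close>, of T]]
    by (simp add: divide_right_mono)
qed

lemma Gamma_telescoping:
  assumes \<gamma>: "\<gamma> \<in> Gamma Y U f T y0"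
  shows "\<exists>\<xi>\<in>fin_on (Gset Y U f). \<forall>\<phi> :: 'a \<Rightarrow> real. continuous_on Y \<phi> \<longrightarrow>
    integral\<^sup>L \<xi> (\<lambda>(y, u). \<phi> (f y u) - \<phi> y) = integral\<^sup>L \<gamma> (\<lambda>(y, u). \<phi> y - \<phi> y0)"
proof -
  obtain y u p where adm: "admissible_fin Y U f T y0 y u" and p: "\<And>t. p t \<in> Gset Y U f"
    and p_less: "\<And>t. t < T \<Longrightarrow> p t = (y t, u t)" and \<gamma>_eq: "\<gamma> = atomic_measure (Gset Y U f) (cesaro_weights T) p"
    using Gamma_eq_atomic_measure[OF \<gamma>] by blast
  define \<xi> where "\<xi> = atomic_measure (Gset Y U f) (\<lambda>t. if t < T then (real T - 1 - real t) / real T else 0) p"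
  have "\<xi> \<in> fin_on (Gset Y U f)"
    unfolding \<xi>_def by (rule atomic_measure_in_fin_on[OF p _ summable_truncated]) simp
  moreover have "integral\<^sup>L \<xi> (\<lambda>(y, u). \<phi> (f y u) - \<phi> y) = integral\<^sup>L \<gamma> (\<lambda>(y, u). \<phi> y - \<phi> y0)"
    if \<phi>: "continuous_on Y \<phi>" for \<phi> :: "'a \<Rightarrow> real"
  proof -
    have "integral\<^sup>L \<xi> (\<lambda>(y, u). \<phi> (f y u) - \<phi> y)
        = (\<Sum>t<T. (real T - 1 - real t) / real T * (\<phi> (y (Suc t)) - \<phi> (y t)))"
      unfolding \<xi>_def using adm
      by (simp add: integral_atomic_measure_truncated[OF compact_graph continuous_on_discrepancy[OF \<phi>] p]
          p_less admissible_fin_def)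
    also have "\<dots> = (\<Sum>t<T. 1 / real T * (\<phi> (y t) - \<phi> (y 0)))"
      using sum_weighted_telescope[of T "\<lambda>t. \<phi> (y t)"] by (simp add: sum_divide_distrib[symmetric])
    also have "\<dots> = integral\<^sup>L \<gamma> (\<lambda>(y, u). \<phi> y - \<phi> y0)"
      unfolding \<gamma>_eq cesaro_weights_def using adm
      by (simp add: integral_atomic_measure_truncated[OF compact_graph continuous_on_offset[OF \<phi>] p]
          p_less admissible_fin_def)
    finally show ?thesis .
  qed
  ultimately show ?thesis
    by blast
qed

lemma Theta_discrepancy_bound:
  fixes \<phi> :: "'a \<Rightarrow> real"
  assumes \<gamma>: "\<gamma> \<in> Theta Y U f \<alpha> y0" and \<alpha>: "0 < \<alpha>" "\<alpha> < 1"
    and \<phi>: "continuous_on Y \<phi>" and B: "\<And>y. y \<in> Y \<Longrightarrow> \<bar>\<phi> y\<bar> \<le> B"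
  shows "\<bar>integral\<^sup>L \<gamma> (\<lambda>(y, u). \<phi> (f y u) - \<phi> y)\<bar> \<le> 2 * B * (1 - \<alpha>) / \<alpha>"
proof -
  obtain y u where adm: "admissible_inf Y U f y0 y u"
    and \<gamma>_eq: "\<gamma> = atomic_measure (Gset Y U f) (\<lambda>t. (1 - \<alpha>) * \<alpha> ^ t) (\<lambda>t. (y t, u t))"
    using Theta_eq_atomic_measure[OF \<gamma>] \<alpha> by auto
  define a where "a t = \<phi> (y t)" for t
  have a_diff_bound: "\<bar>a s - a t\<bar> \<le> 2 * B" for s t
    using adm B[of "y s"] B[of "y t"] abs_triangle_ineq4[of "a s" "a t"]
    by (simp add: a_def admissible_inf_def)
  have "summable (\<lambda>t. \<alpha> ^ t * (a (Suc t) - a t))"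
    using \<alpha> a_diff_bound by (intro summable_geometric_times_bounded[where B="2 * B"]) auto
  then have "(\<Sum>t. (1 - \<alpha>) * \<alpha> ^ t * (a (Suc t) - a t)) = (1 - \<alpha>) / \<alpha> * (\<Sum>t. \<alpha> ^ Suc t * (a (Suc t) - a t))"
    using suminf_mult[of "\<lambda>t. \<alpha> ^ t * (a (Suc t) - a t)" "1 - \<alpha>"]
      suminf_mult[of "\<lambda>t. \<alpha> ^ t * (a (Suc t) - a t)" \<alpha>] \<alpha>
    by (simp add: mult.assoc)
  also have "\<dots> = (1 - \<alpha>) / \<alpha> * (\<Sum>t. (1 - \<alpha>) * \<alpha> ^ t * (a t - a 0))"
    using \<alpha> adm B by (subst suminf_discounted_telescope[where B=B]) (auto simp: a_def admissible_inf_def)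
  finally have "integral\<^sup>L \<gamma> (\<lambda>(y, u). \<phi> (f y u) - \<phi> y) = (1 - \<alpha>) / \<alpha> * (\<Sum>t. (1 - \<alpha>) * \<alpha> ^ t * (a t - a 0))"
    unfolding \<gamma>_eq using \<alpha> adm admissible_inf_in_Gset[OF adm]
    by (simp add: integral_atomic_measure_continuous[OF compact_graph continuous_on_discrepancy[OF \<phi>]]
        summable_mult summable_geometric a_def admissible_inf_def)
  then have "\<bar>integral\<^sup>L \<gamma> (\<lambda>(y, u). \<phi> (f y u) - \<phi> y)\<bar> = (1 - \<alpha>) / \<alpha> * \<bar>\<Sum>t. (1 - \<alpha>) * \<alpha> ^ t * (a t - a 0)\<bar>"
    using \<alpha> by (simp add: abs_mult)
  also have "\<dots> \<le> (1 - \<alpha>) / \<alpha> * (2 * B)"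
    using \<alpha> a_diff_bound by (intro mult_left_mono discounted_average_bound) auto
  finally show ?thesis
    by (simp add: mult.commute)
qed

lemma Theta_telescoping:
  assumes \<gamma>: "\<gamma> \<in> Theta Y U f \<alpha> y0" and \<alpha>: "0 < \<alpha>" "\<alpha> < 1"
  shows "\<exists>\<xi>\<in>fin_on (Gset Y U f). \<forall>\<phi> :: 'a \<Rightarrow> real. continuous_on Y \<phi> \<longrightarrow>
    integral\<^sup>L \<xi> (\<lambda>(y, u). \<phi> (f y u) - \<phi> y) = integral\<^sup>L \<gamma> (\<lambda>(y, u). \<phi> y - \<phi> y0)"
proof -
  obtain y u where adm: "admissible_inf Y U f y0 y u"
    and \<gamma>_eq: "\<gamma> = atomic_measure (Gset Y U f) (\<lambda>t. (1 - \<alpha>) * \<alpha> ^ t) (\<lambda>t. (y t, u t))"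
    using Theta_eq_atomic_measure[OF \<gamma>] \<alpha> by auto
  note p = admissible_inf_in_Gset[OF adm]
  have geometric: "summable (\<lambda>t. \<alpha> ^ t)"
    using \<alpha> by (intro summable_geometric) simp
  have \<xi>_weights: "0 \<le> \<alpha> ^ Suc t" "summable (\<lambda>t. \<alpha> ^ Suc t)" for t
    using \<alpha> summable_mult[OF geometric, of \<alpha>] by simp_all
  have \<gamma>_weights: "0 \<le> (1 - \<alpha>) * \<alpha> ^ t" "summable (\<lambda>t. (1 - \<alpha>) * \<alpha> ^ t)" for t
    using \<alpha> summable_mult[OF geometric, of "1 - \<alpha>"] by simp_all
  define \<xi> where "\<xi> = atomic_measure (Gset Y U f) (\<lambda>t. \<alpha> ^ Suc t) (\<lambda>t. (y t, u t))"
  have "\<xi> \<in> fin_on (Gset Y U f)"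
    unfolding \<xi>_def by (rule atomic_measure_in_fin_on[OF p \<xi>_weights])
  moreover have "integral\<^sup>L \<xi> (\<lambda>(y, u). \<phi> (f y u) - \<phi> y) = integral\<^sup>L \<gamma> (\<lambda>(y, u). \<phi> y - \<phi> y0)"
    if \<phi>: "continuous_on Y \<phi>" for \<phi> :: "'a \<Rightarrow> real"
  proof -
    obtain B where B: "\<And>y. y \<in> Y \<Longrightarrow> \<bar>\<phi> y\<bar> \<le> B"
      using bounded_on_states[OF \<phi>] by blast
    have "integral\<^sup>L \<xi> (\<lambda>(y, u). \<phi> (f y u) - \<phi> y) = (\<Sum>t. \<alpha> ^ Suc t * (\<phi> (y (Suc t)) - \<phi> (y t)))"
      unfolding \<xi>_def integral_atomic_measure_continuous[OF compact_graph continuous_on_discrepancy[OF \<phi>] p \<xi>_weights]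
      using adm by (simp add: admissible_inf_def)
    also have "\<dots> = (\<Sum>t. (1 - \<alpha>) * \<alpha> ^ t * (\<phi> (y t) - \<phi> (y 0)))"
      using \<alpha> adm B by (intro suminf_discounted_telescope[where B=B]) (auto simp: admissible_inf_def)
    also have "\<dots> = integral\<^sup>L \<gamma> (\<lambda>(y, u). \<phi> y - \<phi> y0)"
      unfolding \<gamma>_eq integral_atomic_measure_continuous[OF compact_graph continuous_on_offset[OF \<phi>] p \<gamma>_weights]
      using adm by (simp add: admissible_inf_def)
    finally show ?thesis .
  qed
  ultimately show ?thesis
    by blast
qed

lemma weak_limit_in_W2set:
  assumes \<gamma>: "\<gamma> \<in> prob_on (Gset Y U f)" and conv: "weak_conv (Gset Y U f) gs \<gamma>"
    and vanishing: "\<And>\<phi> :: 'a \<Rightarrow> real. continuous_on Y \<phi> \<Longrightarrow>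
      (\<lambda>i. integral\<^sup>L (gs i) (\<lambda>(y, u). \<phi> (f y u) - \<phi> y)) \<longlonglongrightarrow> 0"
    and telescoping: "\<And>i. \<exists>\<xi>\<in>fin_on (Gset Y U f). \<forall>\<phi> :: 'a \<Rightarrow> real. continuous_on Y \<phi> \<longrightarrow>
      integral\<^sup>L \<xi> (\<lambda>(y, u). \<phi> (f y u) - \<phi> y) = integral\<^sup>L (gs i) (\<lambda>(y, u). \<phi> y - \<phi> y0)"
  shows "\<gamma> \<in> W2set Y U f y0"
proof -
  obtain \<xi> where \<xi>: "\<And>i. \<xi> i \<in> fin_on (Gset Y U f)"
    and \<xi>_eq: "\<And>i (\<phi> :: 'a \<Rightarrow> real). continuous_on Y \<phi> \<Longrightarrow>
      integral\<^sup>L (\<xi> i) (\<lambda>(y, u). \<phi> (f y u) - \<phi> y) = integral\<^sup>L (gs i) (\<lambda>(y, u). \<phi> y - \<phi> y0)"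
  proof -
    have "\<forall>i. \<exists>\<xi>. \<xi> \<in> fin_on (Gset Y U f) \<and> (\<forall>\<phi> :: 'a \<Rightarrow> real. continuous_on Y \<phi> \<longrightarrow>
      integral\<^sup>L \<xi> (\<lambda>(y, u). \<phi> (f y u) - \<phi> y) = integral\<^sup>L (gs i) (\<lambda>(y, u). \<phi> y - \<phi> y0))"
      using telescoping by blast
    then show ?thesis
      using that choice[of "\<lambda>i \<xi>. \<xi> \<in> fin_on (Gset Y U f) \<and> (\<forall>\<phi> :: 'a \<Rightarrow> real. continuous_on Y \<phi> \<longrightarrow>
        integral\<^sup>L \<xi> (\<lambda>(y, u). \<phi> (f y u) - \<phi> y) = integral\<^sup>L (gs i) (\<lambda>(y, u). \<phi> y - \<phi> y0))"]
      by blast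
  qed
  have "\<gamma> \<in> Wset Y U f"
  proof -
    have "integral\<^sup>L \<gamma> (\<lambda>(y, u). \<phi> (f y u) - \<phi> y) = 0" if \<phi>: "continuous_on Y \<phi>" for \<phi> :: "'a \<Rightarrow> real"
      using conv continuous_on_discrepancy[OF \<phi>] vanishing[OF \<phi>] LIMSEQ_unique
      unfolding weak_conv_def by blast
    then show ?thesis
      unfolding Wset_def using \<gamma> by blast
  qed
  moreover have "(\<lambda>i. integral\<^sup>L (\<xi> i) (\<lambda>(y, u). \<phi> (f y u) - \<phi> y)) \<longlonglongrightarrow> integral\<^sup>L \<gamma> (\<lambda>(y, u). \<phi> y - \<phi> y0)"
    if \<phi>: "continuous_on Y \<phi>" for \<phi> :: "'a \<Rightarrow> real"
    using conv continuous_on_offset[OF \<phi>] unfolding weak_conv_def \<xi>_eq[OF \<phi>] by blast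
  ultimately show ?thesis
    unfolding W2set_def using \<xi> by blast
qed

lemma limsup_Gamma_subset_W2set: "limsup_Gamma Y U f y0 \<subseteq> W2set Y U f y0"
proof
  fix \<gamma> assume "\<gamma> \<in> limsup_Gamma Y U f y0"
  then obtain T gs where \<gamma>: "\<gamma> \<in> prob_on (Gset Y U f)" and T: "filterlim T at_top sequentially"
    and gs: "\<forall>i. gs i \<in> Gamma Y U f (T i) y0" and conv: "weak_conv (Gset Y U f) gs \<gamma>"
    unfolding limsup_Gamma_def by blast
  then have gs: "\<And>i. gs i \<in> Gamma Y U f (T i) y0"
    by blast
  show "\<gamma> \<in> W2set Y U f y0"
  proof (rule weak_limit_in_W2set[OF \<gamma> conv _ Gamma_telescoping[OF gs]])
    fix \<phi> :: "'a \<Rightarrow> real" assume \<phi>: "continuous_on Y \<phi>"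
    obtain B where B: "\<And>y. y \<in> Y \<Longrightarrow> \<bar>\<phi> y\<bar> \<le> B"
      using bounded_on_states[OF \<phi>] by blast
    have lim: "(\<lambda>i. 2 * B / T i) \<longlonglongrightarrow> 0"
      using filterlim_compose[OF filterlim_real_sequentially T]
      by (intro tendsto_divide_0[OF tendsto_const] filterlim_at_top_imp_at_infinity)
    have bound: "\<forall>i. norm (integral\<^sup>L (gs i) (\<lambda>(y, u). \<phi> (f y u) - \<phi> y)) \<le> 2 * B / T i"
      using Gamma_discrepancy_bound[OF gs \<phi> B] by simp
    show "(\<lambda>i. integral\<^sup>L (gs i) (\<lambda>(y, u). \<phi> (f y u) - \<phi> y)) \<longlonglongrightarrow> 0"
      by (rule Lim_null_comparison[OF always_eventually[OF bound] lim])
  qed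
qed

lemma limsup_Theta_subset_W2set: "limsup_Theta Y U f y0 \<subseteq> W2set Y U f y0"
proof
  fix \<gamma> assume "\<gamma> \<in> limsup_Theta Y U f y0"
  then obtain \<alpha> gs where \<gamma>: "\<gamma> \<in> prob_on (Gset Y U f)" and \<alpha>01: "\<forall>i. 0 < \<alpha> i \<and> \<alpha> i < 1"
    and "\<alpha> \<longlonglongrightarrow> 1" and gs: "\<forall>i. gs i \<in> Theta Y U f (\<alpha> i) y0" and conv: "weak_conv (Gset Y U f) gs \<gamma>"
    unfolding limsup_Theta_def by blast
  then have \<alpha>: "\<And>i. 0 < \<alpha> i" "\<And>i. \<alpha> i < 1" "\<alpha> \<longlonglongrightarrow> 1" and gs: "\<And>i. gs i \<in> Theta Y U f (\<alpha> i) y0"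
    using \<alpha>01 gs by auto
  have telescoping: "\<exists>\<xi>\<in>fin_on (Gset Y U f). \<forall>\<phi> :: 'a \<Rightarrow> real. continuous_on Y \<phi> \<longrightarrow>
      integral\<^sup>L \<xi> (\<lambda>(y, u). \<phi> (f y u) - \<phi> y) = integral\<^sup>L (gs i) (\<lambda>(y, u). \<phi> y - \<phi> y0)" for i
    by (rule Theta_telescoping[OF gs[of i] \<alpha>(1)[of i] \<alpha>(2)[of i]])
  have vanishing: "(\<lambda>i. integral\<^sup>L (gs i) (\<lambda>(y, u). \<phi> (f y u) - \<phi> y)) \<longlonglongrightarrow> 0"
    if \<phi>: "continuous_on Y \<phi>" for \<phi> :: "'a \<Rightarrow> real"
  proof -
    obtain B where B: "\<And>y. y \<in> Y \<Longrightarrow> \<bar>\<phi> y\<bar> \<le> B"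
      using bounded_on_states[OF \<phi>] by blast
    have "(\<lambda>i. 2 * B * (1 - \<alpha> i) / \<alpha> i) \<longlonglongrightarrow> 2 * B * (1 - 1) / 1"
      by (intro tendsto_divide tendsto_mult tendsto_diff tendsto_const \<alpha>(3)) simp
    then have lim: "(\<lambda>i. 2 * B * (1 - \<alpha> i) / \<alpha> i) \<longlonglongrightarrow> 0"
      by simp
    have bound: "\<forall>i. norm (integral\<^sup>L (gs i) (\<lambda>(y, u). \<phi> (f y u) - \<phi> y)) \<le> 2 * B * (1 - \<alpha> i) / \<alpha> i"
      using Theta_discrepancy_bound[OF gs \<alpha>(1,2) \<phi> B] by simp
    show ?thesis
      by (rule Lim_null_comparison[OF always_eventually[OF bound] lim])
  qed
  show "\<gamma> \<in> W2set Y U f y0"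
    by (rule weak_limit_in_W2set[OF \<gamma> conv vanishing telescoping])
qed

lemma limsup_Gamma_nonempty:
  assumes y0: "y0 \<in> Y" and A: "\<And>y. y \<in> Y \<Longrightarrow> Aset Y U f y \<noteq> {}"
  shows "limsup_Gamma Y U f y0 \<noteq> {}"
proof -
  define next_control where "next_control z = (SOME v. v \<in> Aset Y U f z)" for z
  have next_control: "next_control z \<in> Aset Y U f z" if "z \<in> Y" for z
    unfolding next_control_def using A[OF that] by (simp add: some_in_eq)
  define y where "y t = ((\<lambda>z. f z (next_control z)) ^^ t) y0" for t
  define u where "u t = next_control (y t)" for t
  have "y t \<in> Y" for t
    by (induction t) (use y0 next_control in \<open>auto simp: y_def Aset_def\<close>)
  then have adm: "admissible_inf Y U f y0 y u"
    using next_control by (simp add: admissible_inf_def y_def u_def)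
  obtain r \<gamma> where r: "strict_mono r" and \<gamma>: "\<gamma> \<in> prob_on (Gset Y U f)"
    and conv: "weak_conv (Gset Y U f) (\<lambda>k. atomic_measure (Gset Y U f) (cesaro_weights (Suc (r k))) (\<lambda>t. (y t, u t))) \<gamma>"
    by (rule atomic_prob_measures_weak_conv_subseq[OF compact_graph,
          of "\<lambda>n t. (y t, u t)" "\<lambda>n. cesaro_weights (Suc n)"])
      (auto simp: admissible_inf_in_Gset[OF adm] cesaro_weights_nonneg summable_cesaro_weights suminf_cesaro_weights)
  have "filterlim (\<lambda>k. Suc (r k)) at_top sequentially"
    using filterlim_subseq[OF r] by (rule filterlim_compose[OF filterlim_Suc])
  then have "\<gamma> \<in> limsup_Gamma Y U f y0"
    unfolding limsup_Gamma_def mem_Collect_eq using \<gamma> conv atomic_measure_in_Gamma[OF adm]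
    by (intro conjI exI[of _ "\<lambda>k. Suc (r k)"]
        exI[of _ "\<lambda>k. atomic_measure (Gset Y U f) (cesaro_weights (Suc (r k))) (\<lambda>t. (y t, u t))"]) auto
  then show ?thesis
    by blast
qed

end

theorem lemma2p1:
  fixes Y :: "'a::euclidean_space set" and U0 :: "'b::metric_space set"
    and U :: "'a \<Rightarrow> 'b set" and f :: "'a \<Rightarrow> 'b \<Rightarrow> 'a" and y0 :: 'a
  assumes "compact Y" and "Y \<noteq> {}"
    and "compact U0"
    and "\<forall>y\<in>Y. U y \<subseteq> U0 \<and> compact (U y)"
    and "usc_on Y U"
    and "continuous_on (UNIV \<times> U0) (\<lambda>(y, u). f y u)"
    and "\<forall>y\<in>Y. Aset Y U f y \<noteq> {}"
    and "y0 \<in> Y"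
  shows "limsup_Gamma Y U f y0 \<subseteq> W2set Y U f y0 \<and>
         limsup_Theta Y U f y0 \<subseteq> W2set Y U f y0 \<and>
         W2set Y U f y0 \<noteq> {}"
proof -
  have "Gset Y U f \<subseteq> UNIV \<times> U0"
    using assms(4) by (auto simp: Gset_def Aset_def)
  then interpret compact_control_system Y U f
    using compact_control_system.intro[OF assms(1) compact_Gset[OF assms(1,3-6)] continuous_on_subset[OF assms(6)]]
    by blast
  show ?thesis
    using limsup_Gamma_subset_W2set limsup_Theta_subset_W2set limsup_Gamma_nonempty assms(7,8) by blast
qed

end
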